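(* Let $k\ge1$ and let $A_1,\dots,A_n$ be independent events with probabilities $1\ge u_1\ge u_2\ge\dots\ge u_n\ge0$. Then \[ \mathbf{P}\big(\{A_i\}_{i=1}^n\text{ has no }k\text{-gaps}\big)\;\le\;\prod_{i=1}^{n-k+1}f_k(1-u_i), \] an empty product being $1$.
   Context: For an integer $k\ge1$, $f_k:[0,1]\to[0,1]$ denotes the unique decreasing function satisfying $f_k(x)^k-f_k(x)^{k+1}=x^k-x^{k+1}$ for all $x\in[0,1]$; it is continuous with $f_k(0)=1$, $f_k(1)=0$. A sequence of events $A_1,\dots,A_n$ has a $k$-gap if there is an index $i$ with $i+k-1\le n$ such that none of $A_i,\dots,A_{i+k-1}$ occurs. *)

theory Defs
  imports "HOL-Probability.Probability"
begin

definition fk_spec :: "nat \<Rightarrow> (real \<Rightarrow> real) \<Rightarrow> bool" where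
  "fk_spec k f \<longleftrightarrow>
     (\<forall>x\<in>{0..1}. f x \<in> {0..1} \<and> f x ^ k - f x ^ (k+1) = x ^ k - x ^ (k+1)) \<and>
     (\<forall>x\<in>{0..1}. \<forall>y\<in>{0..1}. x \<le> y \<longrightarrow> f y \<le> f x)"

definition f_k :: "nat \<Rightarrow> real \<Rightarrow> real" where
  "f_k k x = (THE y. \<exists>f. fk_spec k f \<and> f x = y)"

definition has_k_gap :: "nat \<Rightarrow> nat \<Rightarrow> (nat \<Rightarrow> 'a set) \<Rightarrow> 'a \<Rightarrow> bool" where
  "has_k_gap k n A \<omega> \<longleftrightarrow>
     (\<exists>i. 1 \<le> i \<and> i + k - 1 \<le> n \<and> (\<forall>j\<in>{i..i+k-1}. \<omega> \<notin> A j))"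

end

theory Submission
  imports Defs
begin

(* Record an outcome by its occurrence pattern S, the set of indices of occurring events.
   Scanning the events in order, the only information needed is the length t < k of the
   current run of non-occurring events.  The expectation of phi(final run) on the no-gap
   event is a sum over gap-free patterns (nogap_sum); appending an event of probability p
   acts on the test function phi by a positive linear transfer operator T_p.

   1. f_k: g(y) = y^k - y^(k+1) increases strictly up to k/(k+1) and decreases after it,
      so f_k(x) is the partner of x on the other side of the peak.
   2. For x in [0,1] an explicit vector w_x with w_x(0) = 1 and w_x(k) = 0 is an
      eigenvector of T_(1-x) with eigenvalue f_k(x); w_x decreases in x and satisfies
      w_x(t) >= 1 - x^(k-t).
   3. Testing with w_(1 - u_m) and inducting over the first n-k+1 events yields the
      product bound; the last k-1 events are absorbed using w_x(t) >= 1 - x^(k-t).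
   4. By independence the no-gap probability equals the combinatorial sum. *)

text \<open>The hump \<open>g(y) = y^k - y^(k+1)\<close>: \<open>f_k\<close> maps \<open>x\<close> to the other point of
  \<open>[0,1]\<close> at which \<open>g\<close> takes the same value.\<close>
definition hump :: "nat \<Rightarrow> real \<Rightarrow> real" where
  "hump k y = y ^ k - y ^ Suc k"

definition peak :: "nat \<Rightarrow> real" where
  "peak k = real k / real (Suc k)"

lemma peak_bounds: "k \<ge> 1 \<Longrightarrow> 0 < peak k \<and> peak k < 1"
  unfolding peak_def by (auto simp: field_simps)

lemma hump_nonneg: "0 \<le> y \<Longrightarrow> y \<le> 1 \<Longrightarrow> 0 \<le> hump k y"
  unfolding hump_def by (simp add: mult_left_le_one_le)

lemma hump_0: "k \<ge> 1 \<Longrightarrow> hump k 0 = 0" and hump_1: "hump k 1 = 0"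
  by (auto simp: hump_def)

lemma isCont_hump: "isCont (hump k) y"
  unfolding hump_def[abs_def] by (intro continuous_intros)

lemma hump_deriv:
  assumes "k \<ge> 1"
  shows "DERIV (hump k) y :> y ^ (k - 1) * (real k - real (Suc k) * y)"
proof -
  obtain m where k: "k = Suc m" using assms by (cases k) auto
  have "DERIV (\<lambda>y. y ^ Suc m - y ^ Suc (Suc m)) y
      :> real (Suc m) * y ^ m - real (Suc (Suc m)) * y ^ Suc m"
    using DERIV_diff[OF DERIV_pow[of "Suc m" y] DERIV_pow[of "Suc (Suc m)" y]] by simp
  then show ?thesis unfolding hump_def[abs_def] k by (simp add: algebra_simps)
qed

lemma hump_strict_mono_on:
  assumes k: "k \<ge> 1"
  shows "strict_mono_on {0..peak k} (hump k)"
proof (rule strict_mono_onI)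
  fix a b assume ab: "a \<in> {0..peak k}" "b \<in> {0..peak k}" "a < b"
  show "hump k a < hump k b"
  proof (rule DERIV_pos_imp_increasing_open[OF \<open>a < b\<close>])
    fix x assume x: "a < x" "x < b"
    have "real (Suc k) * x < real (Suc k) * peak k"
      using x ab by (intro mult_strict_left_mono) auto
    then have "0 < real k - real (Suc k) * x" by (simp add: peak_def)
    moreover have "0 < x ^ (k - 1)" using x ab by simp
    ultimately show "\<exists>y. DERIV (hump k) x :> y \<and> y > 0"
      using hump_deriv[OF k, of x] by auto
  qed (intro continuous_at_imp_continuous_on ballI isCont_hump)
qed

lemma hump_strict_antimono_on:
  assumes k: "k \<ge> 1"
  shows "strict_antimono_on {peak k..1} (hump k)"
proof (rule monotone_onI)
  fix a b assume ab: "a \<in> {peak k..1}" "b \<in> {peak k..1}" "a < b"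
  show "hump k b < hump k a"
  proof (rule DERIV_neg_imp_decreasing_open[OF \<open>a < b\<close>])
    fix x assume x: "a < x" "x < b"
    have "real (Suc k) * peak k < real (Suc k) * x"
      using x ab by (intro mult_strict_left_mono) auto
    then have "real k - real (Suc k) * x < 0" by (simp add: peak_def)
    moreover have "0 < x ^ (k - 1)" using x ab peak_bounds[OF k] by simp
    ultimately show "\<exists>y. DERIV (hump k) x :> y \<and> y < 0"
      using hump_deriv[OF k, of x] by (auto simp: mult_pos_neg)
  qed (intro continuous_at_imp_continuous_on ballI isCont_hump)
qed

lemma hump_le_iff_left:
  "k \<ge> 1 \<Longrightarrow> a \<in> {0..peak k} \<Longrightarrow> b \<in> {0..peak k} \<Longrightarrow> hump k a \<le> hump k b \<longleftrightarrow> a \<le> b"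
  using strict_mono_on_less_eq[OF hump_strict_mono_on] by blast

lemma hump_le_iff_right:
  assumes k: "k \<ge> 1" and ab: "a \<in> {peak k..1}" "b \<in> {peak k..1}"
  shows "hump k a \<le> hump k b \<longleftrightarrow> b \<le> a"
proof -
  have less: "hump k y < hump k x" if "x \<in> {peak k..1}" "y \<in> {peak k..1}" "x < y" for x y
    using monotone_onD[OF hump_strict_antimono_on[OF k]] that by blast
  show ?thesis
    using less[of a b] less[of b a] ab by (cases a b rule: linorder_cases) auto
qed

text \<open>The partner of \<open>x\<close>: the point on the other side of the peak with the same hump
  value.  It is the explicit description of \<open>f_k\<close>.\<close>
definition partner :: "nat \<Rightarrow> real \<Rightarrow> real" where
  "partner k x = (if x \<le> peak k then THE y. y \<in> {peak k..1} \<and> hump k y = hump k x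
                  else THE y. y \<in> {0..peak k} \<and> hump k y = hump k x)"

text \<open>On each side, the partner exists by the intermediate value theorem and is unique
  by strict monotonicity on the other side.\<close>
lemma partner_left:
  assumes k: "k \<ge> 1" and x: "x \<in> {0..peak k}"
  shows "partner k x \<in> {peak k..1} \<and> hump k (partner k x) = hump k x"
proof -
  have "\<exists>y. peak k \<le> y \<and> y \<le> 1 \<and> hump k y = hump k x"
  proof (rule IVT2)
    show "hump k 1 \<le> hump k x" using hump_1 hump_nonneg[of x k] x peak_bounds[OF k] by auto
    show "hump k x \<le> hump k (peak k)" using hump_le_iff_left[OF k x] x peak_bounds[OF k] by auto
  qed (use peak_bounds[OF k] isCont_hump in auto)
  then have "\<exists>!y. y \<in> {peak k..1} \<and> hump k y = hump k x"
    using hump_le_iff_right[OF k] by (metis atLeastAtMost_iff order_antisym order_refl)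
  then have "(THE y. y \<in> {peak k..1} \<and> hump k y = hump k x) \<in> {peak k..1} \<and>
      hump k (THE y. y \<in> {peak k..1} \<and> hump k y = hump k x) = hump k x"
    by (rule theI')
  moreover have "partner k x = (THE y. y \<in> {peak k..1} \<and> hump k y = hump k x)"
    using x by (simp add: partner_def)
  ultimately show ?thesis by simp
qed

lemma partner_right:
  assumes k: "k \<ge> 1" and x: "peak k < x" "x \<le> 1"
  shows "partner k x \<in> {0..peak k} \<and> hump k (partner k x) = hump k x"
proof -
  have "\<exists>y. 0 \<le> y \<and> y \<le> peak k \<and> hump k y = hump k x"
  proof (rule IVT)
    show "hump k 0 \<le> hump k x" using hump_0[OF k] hump_nonneg[of x k] x peak_bounds[OF k] by auto
    show "hump k x \<le> hump k (peak k)" using hump_le_iff_right[OF k, of x "peak k"] x by auto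
  qed (use peak_bounds[OF k] isCont_hump in auto)
  then have "\<exists>!y. y \<in> {0..peak k} \<and> hump k y = hump k x"
    using hump_le_iff_left[OF k] by (metis atLeastAtMost_iff order_antisym order_refl)
  then have "(THE y. y \<in> {0..peak k} \<and> hump k y = hump k x) \<in> {0..peak k} \<and>
      hump k (THE y. y \<in> {0..peak k} \<and> hump k y = hump k x) = hump k x"
    by (rule theI')
  moreover have "partner k x = (THE y. y \<in> {0..peak k} \<and> hump k y = hump k x)"
    using x by (simp add: partner_def)
  ultimately show ?thesis by simp
qed

lemma partner_range: "k \<ge> 1 \<Longrightarrow> x \<in> {0..1} \<Longrightarrow> partner k x \<in> {0..1} \<and> hump k (partner k x) = hump k x"
  using partner_left[of k x] partner_right[of k x] peak_bounds[of k] by (cases "x \<le> peak k") auto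

lemma fk_spec_partner:
  assumes k: "k \<ge> 1"
  shows "fk_spec k (partner k)"
proof -
  have "partner k y \<le> partner k x" if xy: "x \<in> {0..1}" "y \<in> {0..1}" "x \<le> y" for x y
  proof (cases "y \<le> peak k")
    case True
    then have "hump k x \<le> hump k y" using hump_le_iff_left[OF k, of x y] xy by auto
    then show ?thesis
      using partner_left[OF k, of x] partner_left[OF k, of y] xy True
        hump_le_iff_right[OF k, of "partner k x" "partner k y"] by auto
  next
    case False
    show ?thesis
    proof (cases "x \<le> peak k")
      case True
      then show ?thesis using partner_left[OF k, of x] partner_right[OF k, of y] xy False by auto
    next
      case False
      then have "hump k y \<le> hump k x" using hump_le_iff_right[OF k, of y x] xy by auto
      then show ?thesis
        using partner_right[OF k, of x] partner_right[OF k, of y] xy False \<open>\<not> y \<le> peak k\<close>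
          hump_le_iff_left[OF k, of "partner k y" "partner k x"] by auto
    qed
  qed
  then show ?thesis
    using partner_range[OF k] unfolding fk_spec_def hump_def by auto
qed

text \<open>Every function meeting the specification fixes the peak (by injectivity on either
  side of it) and therefore, being antitone, swaps the two sides: it is the partner map.\<close>
lemma fk_spec_unique:
  assumes k: "k \<ge> 1" and f: "fk_spec k f" and x: "x \<in> {0..1}"
  shows "f x = partner k x"
proof -
  have c: "0 < peak k" "peak k < 1" using peak_bounds[OF k] by auto
  have range: "f y \<in> {0..1}" "hump k (f y) = hump k y" if "y \<in> {0..1}" for y
    using f that unfolding fk_spec_def hump_def by auto
  have anti: "f b \<le> f a" if "a \<in> {0..1}" "b \<in> {0..1}" "a \<le> b" for a b
    using f that unfolding fk_spec_def by auto
  have fixed: "f (peak k) = peak k"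
    using range[of "peak k"] c
      hump_le_iff_left[OF k, of "f (peak k)" "peak k"] hump_le_iff_left[OF k, of "peak k" "f (peak k)"]
      hump_le_iff_right[OF k, of "f (peak k)" "peak k"] hump_le_iff_right[OF k, of "peak k" "f (peak k)"]
    by (cases "f (peak k) \<le> peak k") auto
  show ?thesis
  proof (cases "x \<le> peak k")
    case True
    then have "peak k \<le> f x" using anti[of x "peak k"] fixed x c by auto
    then show ?thesis
      using range[OF x] partner_left[OF k, of x] True x hump_le_iff_right[OF k, of "f x" "partner k x"]
        hump_le_iff_right[OF k, of "partner k x" "f x"] by auto
  next
    case False
    then have "f x \<le> peak k" using anti[of "peak k" x] fixed x c by auto
    then show ?thesis
      using range[OF x] partner_right[OF k, of x] False x hump_le_iff_left[OF k, of "f x" "partner k x"]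
        hump_le_iff_left[OF k, of "partner k x" "f x"] by auto
  qed
qed

lemma f_k_eq_partner:
  assumes k: "k \<ge> 1" and x: "x \<in> {0..1}"
  shows "f_k k x = partner k x"
  unfolding f_k_def
proof (rule the_equality)
  show "\<exists>f. fk_spec k f \<and> f x = partner k x" using fk_spec_partner[OF k] by blast
qed (use fk_spec_unique[OF k _ x] in blast)

lemma f_k_range: "k \<ge> 1 \<Longrightarrow> x \<in> {0..1} \<Longrightarrow> f_k k x \<in> {0..1}"
  using partner_range f_k_eq_partner by metis

lemma hump_f_k: "k \<ge> 1 \<Longrightarrow> x \<in> {0..1} \<Longrightarrow> hump k (f_k k x) = hump k x"
  using partner_range f_k_eq_partner by metis

lemma f_k_antitone: "k \<ge> 1 \<Longrightarrow> x \<in> {0..1} \<Longrightarrow> y \<in> {0..1} \<Longrightarrow> x \<le> y \<Longrightarrow> f_k k y \<le> f_k k x"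
  using fk_spec_partner[of k] f_k_eq_partner[of k] unfolding fk_spec_def by metis

lemma f_k_ge_peak: "k \<ge> 1 \<Longrightarrow> x \<in> {0..peak k} \<Longrightarrow> peak k \<le> f_k k x"
  using partner_left[of k x] f_k_eq_partner[of k x] peak_bounds[of k] by auto

lemma f_k_fixpoint: "k \<ge> 1 \<Longrightarrow> x \<in> {0..1} \<Longrightarrow> f_k k x = x \<Longrightarrow> x = peak k"
  using partner_left[of k x] partner_right[of k x] f_k_eq_partner[of k x]
  by (cases "x \<le> peak k") auto

text \<open>A test function \<open>\<phi>\<close> is evaluated at the length \<open>t < k\<close>
  of the current run of non-occurring events; appending an event of probability \<open>p\<close>
  resets the run (with probability \<open>p\<close>) or extends it, a run of length \<open>k\<close> being a gap.\<close>
definition transfer :: "nat \<Rightarrow> real \<Rightarrow> (nat \<Rightarrow> real) \<Rightarrow> nat \<Rightarrow> real" where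
  "transfer k p \<phi> t = p * \<phi> 0 + (1 - p) * (if Suc t < k then \<phi> (Suc t) else 0)"

text \<open>The partial sums \<open>N_x(m) = \<Sum>i<m. x^i f_k(x)^(k-1-i)\<close>; \<open>N_x(k)\<close> is the quotient
  \<open>(x^k - f_k(x)^k) / (x - f_k(x))\<close>.\<close>
definition eigen_sum :: "nat \<Rightarrow> real \<Rightarrow> nat \<Rightarrow> real" where
  "eigen_sum k x m = (\<Sum>i<m. x ^ i * f_k k x ^ (k - Suc i))"

text \<open>The eigenvector \<open>w_x(t) = N_x(k-t) / N_x(k)\<close> of the transfer operator with
  parameter \<open>1 - x\<close>, with eigenvalue \<open>f_k(x)\<close>.\<close>
definition eigvec :: "nat \<Rightarrow> real \<Rightarrow> nat \<Rightarrow> real" where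
  "eigvec k x t = eigen_sum k x (k - t) / eigen_sum k x k"

lemma eigen_sum_nonneg: "k \<ge> 1 \<Longrightarrow> x \<in> {0..1} \<Longrightarrow> 0 \<le> eigen_sum k x m"
  unfolding eigen_sum_def using f_k_range[of k x] by (intro sum_nonneg) auto

lemma eigen_sum_pos:
  assumes k: "k \<ge> 1" and x: "x \<in> {0..1}"
  shows "0 < eigen_sum k x k"
proof -
  have term_le: "x ^ i * f_k k x ^ (k - Suc i) \<le> eigen_sum k x k" if "i < k" for i
    unfolding eigen_sum_def using that f_k_range[OF k x] x by (intro member_le_sum) auto
  show ?thesis
  proof (cases "x = 0")
    case True
    then have "0 < f_k k x" using f_k_ge_peak[OF k, of x] peak_bounds[OF k] by auto
    then have "0 < x ^ 0 * f_k k x ^ (k - Suc 0)" by simp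
    then show ?thesis using term_le[of 0] k by linarith
  next
    case False
    then have "0 < x ^ (k - 1) * f_k k x ^ (k - Suc (k - 1))" using x k by simp
    then show ?thesis using term_le[of "k - 1"] k by linarith
  qed
qed

text \<open>The defining equation of \<open>f_k\<close>, divided by \<open>x - f_k(x)\<close>: \<open>f_k(x)^k = (1 - x) N_x(k)\<close>.
  At the fixed point \<open>x = k/(k+1)\<close> the division is replaced by a direct computation.\<close>
lemma f_k_power_eq:
  assumes k: "k \<ge> 1" and x: "x \<in> {0..1}"
  shows "f_k k x ^ k = (1 - x) * eigen_sum k x k"
proof -
  define F where "F = f_k k x"
  define N where "N = eigen_sum k x k"
  have hump_eq: "F ^ k - F * F ^ k = x ^ k - x * x ^ k"
    using hump_f_k[OF k x] unfolding F_def hump_def by simp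
  have quotient: "x ^ k - F ^ k = (x - F) * N"
    unfolding N_def eigen_sum_def F_def power_diff_sumr2[of x k "f_k k x"] by (simp add: mult.commute)
  show ?thesis
  proof (cases "F = x")
    case False
    have "(x - F) * (F ^ k - (1 - x) * N) = (x - F) * F ^ k - (1 - x) * ((x - F) * N)"
      by (simp add: algebra_simps)
    also have "\<dots> = (F ^ k - F * F ^ k) - (x ^ k - x * x ^ k)"
      unfolding quotient[symmetric] by (simp add: algebra_simps)
    then show ?thesis using False hump_eq unfolding F_def N_def by simp
  next
    case True
    then have "x = peak k" using f_k_fixpoint[OF k x] unfolding F_def by simp
    then have "(1 - x) * real k = x" unfolding peak_def by (simp add: field_simps)
    moreover have "N = real k * x ^ (k - 1)"
      using True unfolding N_def eigen_sum_def F_def by (simp add: power_add[symmetric])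
    moreover have "x * x ^ (k - 1) = x ^ k" using k by (simp add: power_eq_if[of x k])
    ultimately show ?thesis using True unfolding F_def N_def by (metis mult.assoc)
  qed
qed

lemma eigen_sum_Suc:
  assumes k: "k \<ge> 1" and m: "Suc m \<le> k"
  shows "f_k k x * eigen_sum k x (Suc m) = f_k k x ^ k + x * eigen_sum k x m"
  using m
proof (induction m)
  case 0
  then show ?case unfolding eigen_sum_def using k by (simp add: power_eq_if[of "f_k k x" k])
next
  case (Suc m)
  have shift: "f_k k x * f_k k x ^ (k - Suc (Suc m)) = f_k k x ^ (k - Suc m)"
    using Suc.prems by (simp add: Suc_diff_Suc power_Suc[symmetric])
  have "f_k k x * eigen_sum k x (Suc (Suc m))
      = f_k k x * eigen_sum k x (Suc m) + x ^ Suc m * (f_k k x * f_k k x ^ (k - Suc (Suc m)))"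
    unfolding eigen_sum_def by (simp add: algebra_simps)
  also have "\<dots> = f_k k x ^ k + x * eigen_sum k x m + x ^ Suc m * f_k k x ^ (k - Suc m)"
    using Suc by (simp add: shift)
  also have "\<dots> = f_k k x ^ k + x * eigen_sum k x (Suc m)"
    unfolding eigen_sum_def by (simp add: algebra_simps sum_distrib_left)
  finally show ?case .
qed

lemma eigvec_0: "k \<ge> 1 \<Longrightarrow> x \<in> {0..1} \<Longrightarrow> eigvec k x 0 = 1"
  unfolding eigvec_def using eigen_sum_pos[of k x] by simp

lemma eigvec_k: "eigvec k x k = 0"
  unfolding eigvec_def eigen_sum_def by simp

lemma eigvec_nonneg: "k \<ge> 1 \<Longrightarrow> x \<in> {0..1} \<Longrightarrow> 0 \<le> eigvec k x t"
  unfolding eigvec_def using eigen_sum_pos[of k x] eigen_sum_nonneg[of k x] by simp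

text \<open>Since \<open>w_x(k) = 0\<close>, the transfer operator acts on \<open>w_x\<close> without truncation.\<close>
lemma transfer_eigvec_unfold:
  assumes k: "k \<ge> 1" and x: "x \<in> {0..1}" and t: "t < k"
  shows "transfer k p (eigvec k x) t = p + (1 - p) * eigvec k x (Suc t)"
proof (cases "Suc t < k")
  case False
  then have "Suc t = k" using t by simp
  then show ?thesis using eigvec_0[OF k x] eigvec_k[of k x] by (simp add: transfer_def)
qed (simp add: transfer_def eigvec_0[OF k x])

lemma transfer_eigvec:
  assumes k: "k \<ge> 1" and x: "x \<in> {0..1}" and t: "t < k"
  shows "transfer k (1 - x) (eigvec k x) t = f_k k x * eigvec k x t"
proof -
  define N where "N = eigen_sum k x k"
  have N: "0 < N" using eigen_sum_pos[OF k x] unfolding N_def .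
  have step: "f_k k x * eigen_sum k x (k - t) = (1 - x) * N + x * eigen_sum k x (k - Suc t)"
    using eigen_sum_Suc[OF k, of "k - Suc t" x] f_k_power_eq[OF k x] t unfolding N_def
    by (simp add: Suc_diff_Suc)
  have "transfer k (1 - x) (eigvec k x) t = (1 - x) + x * (eigen_sum k x (k - Suc t) / N)"
    unfolding transfer_eigvec_unfold[OF k x t] by (simp add: eigvec_def N_def)
  also have "\<dots> = (f_k k x * eigen_sum k x (k - t)) / N" using N step by (simp add: field_simps)
  also have "\<dots> = f_k k x * eigvec k x t" unfolding eigvec_def N_def by simp
  finally show ?thesis .
qed

text \<open>A lower bound: \<open>w_x(k-m) \<ge> 1 - x^m\<close>, by induction on \<open>m\<close> using the eigenvalue
  equation and \<open>f_k(x) \<le> 1\<close>.\<close>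
lemma eigvec_lower:
  assumes k: "k \<ge> 1" and x: "x \<in> {0..1}"
  shows "m \<le> k \<Longrightarrow> 1 - x ^ m \<le> eigvec k x (k - m)"
proof (induction m)
  case 0
  then show ?case using eigvec_k[of k x] by simp
next
  case (Suc m)
  have t: "k - Suc m < k" and s: "Suc (k - Suc m) = k - m" using Suc.prems by auto
  have eq: "(1 - x) + x * eigvec k x (k - m) = f_k k x * eigvec k x (k - Suc m)"
    using transfer_eigvec[OF k x t] transfer_eigvec_unfold[OF k x t] s by simp
  have "f_k k x * eigvec k x (k - Suc m) \<le> eigvec k x (k - Suc m)"
    using f_k_range[OF k x] eigvec_nonneg[OF k x] by (simp add: mult_left_le_one_le)
  moreover have "x * (1 - x ^ m) \<le> x * eigvec k x (k - m)"
    using Suc x by (intro mult_left_mono) auto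
  ultimately show ?case using eq by (simp add: algebra_simps)
qed

lemma monomial_exchange:
  fixes a A b B :: real
  assumes nonneg: "0 \<le> a" "0 \<le> A" "0 \<le> b" "0 \<le> B" and aB: "a * B \<le> b * A"
    and ij: "i < j" "j < k"
  shows "b ^ i * B ^ (k - Suc i) * (a ^ j * A ^ (k - Suc j))
       \<le> a ^ i * A ^ (k - Suc i) * (b ^ j * B ^ (k - Suc j))"
proof -
  obtain d where j: "j = i + d" using ij by (metis less_imp_add_positive)
  define e where "e = k - Suc j"
  have ki: "k - Suc i = e + d" using ij j unfolding e_def by simp
  define C where "C = a ^ i * b ^ i * A ^ e * B ^ e"
  have "C * (a * B) ^ d \<le> C * (b * A) ^ d"
    using aB nonneg unfolding C_def by (intro mult_left_mono power_mono) auto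
  moreover have "b ^ i * B ^ (k - Suc i) * (a ^ j * A ^ (k - Suc j)) = C * (a * B) ^ d"
    unfolding ki e_def[symmetric] C_def by (simp only: j power_add power_mult_distrib mult_ac)
  moreover have "a ^ i * A ^ (k - Suc i) * (b ^ j * B ^ (k - Suc j)) = C * (b * A) ^ d"
    unfolding ki e_def[symmetric] C_def by (simp only: j power_add power_mult_distrib mult_ac)
  ultimately show ?thesis by simp
qed

text \<open>The eigenvector decreases in \<open>x\<close>: writing \<open>N_x(k) = N_x(m) + R_x(m)\<close>, the claim
  \<open>N_y(m) N_x(k) \<le> N_x(m) N_y(k)\<close> reduces to \<open>N_y(m) R_x(m) \<le> N_x(m) R_y(m)\<close>, which
  holds termwise by the exchange inequality since \<open>f_k\<close> is antitone.\<close>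
lemma eigvec_antitone:
  assumes k: "k \<ge> 1" and x: "x \<in> {0..1}" and y: "y \<in> {0..1}" and xy: "x \<le> y"
  shows "eigvec k y t \<le> eigvec k x t"
proof -
  define m where "m = k - t"
  define A where "A = f_k k x"
  define B where "B = f_k k y"
  have AB: "0 \<le> A" "0 \<le> B" "B \<le> A"
    using f_k_range[OF k x] f_k_range[OF k y] f_k_antitone[OF k x y xy] unfolding A_def B_def by auto
  have aB: "x * B \<le> y * A" using AB x y xy by (intro mult_mono) auto
  define R where "R z Z = (\<Sum>j\<in>{m..<k}. z ^ j * Z ^ (k - Suc j))" for z Z :: real
  have split: "eigen_sum k z k = eigen_sum k z m + R z (f_k k z)" for z
    unfolding eigen_sum_def R_def m_def by (simp add: lessThan_atLeast0 sum.atLeastLessThan_concat)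
  have "eigen_sum k y m * R x A = (\<Sum>i<m. \<Sum>j\<in>{m..<k}. (y ^ i * B ^ (k - Suc i)) * (x ^ j * A ^ (k - Suc j)))"
    unfolding eigen_sum_def R_def B_def by (simp add: sum_product)
  also have "\<dots> \<le> (\<Sum>i<m. \<Sum>j\<in>{m..<k}. (x ^ i * A ^ (k - Suc i)) * (y ^ j * B ^ (k - Suc j)))"
    using x y AB aB by (intro sum_mono monomial_exchange) auto
  also have "\<dots> = eigen_sum k x m * R y B"
    unfolding eigen_sum_def R_def A_def by (simp add: sum_product)
  finally have "eigen_sum k y m * eigen_sum k x k \<le> eigen_sum k x m * eigen_sum k y k"
    using split[of x] split[of y] unfolding A_def B_def by (simp add: algebra_simps)
  then show ?thesis
    using eigen_sum_pos[OF k x] eigen_sum_pos[OF k y] unfolding eigvec_def m_def[symmetric]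
    by (simp add: divide_simps)
qed

fun final_run :: "nat \<Rightarrow> nat set \<Rightarrow> nat" where
  "final_run 0 S = 0"
| "final_run (Suc n) S = (if Suc n \<in> S then 0 else Suc (final_run n S))"

fun has_gap :: "nat \<Rightarrow> nat \<Rightarrow> nat set \<Rightarrow> bool" where
  "has_gap k 0 S = False"
| "has_gap k (Suc n) S = (has_gap k n S \<or> k \<le> final_run (Suc n) S)"

definition pattern_prob :: "(nat \<Rightarrow> real) \<Rightarrow> nat \<Rightarrow> nat set \<Rightarrow> real" where
  "pattern_prob u n S = (\<Prod>i\<in>{1..n}. if i \<in> S then u i else 1 - u i)"

text \<open>The expectation of \<open>\<phi>(final run)\<close> on the event that there is no \<open>k\<close>-gap among the
  first \<open>n\<close> events; for \<open>\<phi> = 1\<close> this is the probability of having no \<open>k\<close>-gap.\<close>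
definition nogap_sum :: "nat \<Rightarrow> (nat \<Rightarrow> real) \<Rightarrow> nat \<Rightarrow> (nat \<Rightarrow> real) \<Rightarrow> real" where
  "nogap_sum k u n \<phi> =
     (\<Sum>S\<in>Pow {1..n}. if has_gap k n S then 0 else pattern_prob u n S * \<phi> (final_run n S))"

lemma final_run_insert: "m < a \<Longrightarrow> final_run m (insert a S) = final_run m S"
  by (induction m) auto

lemma has_gap_insert: "m < a \<Longrightarrow> has_gap k m (insert a S) = has_gap k m S"
  by (induction m) (auto simp: final_run_insert simp del: final_run.simps)

text \<open>Without a gap the final run is shorter than \<open>k\<close>, so test functions only matter
  on \<open>{0..<k}\<close>.\<close>
lemma final_run_less: "k \<ge> 1 \<Longrightarrow> \<not> has_gap k n S \<Longrightarrow> final_run n S < k"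
  by (cases n) auto

lemma pattern_prob_nonneg: "(\<And>i. i \<in> {1..n} \<Longrightarrow> u i \<in> {0..1}) \<Longrightarrow> 0 \<le> pattern_prob u n S"
  unfolding pattern_prob_def by (intro prod_nonneg) auto

lemma le_final_run_iff:
  "m \<le> final_run n S \<longleftrightarrow> m \<le> n \<and> (\<forall>j. n < j + m \<longrightarrow> j \<le> n \<longrightarrow> j \<notin> S)"
proof (induction n arbitrary: m)
  case (Suc n)
  show ?case
  proof (cases m)
    case (Suc m')
    have "m \<le> final_run (Suc n) S \<longleftrightarrow> Suc n \<notin> S \<and> m' \<le> n \<and> (\<forall>j. n < j + m' \<longrightarrow> j \<le> n \<longrightarrow> j \<notin> S)"
      using Suc.IH Suc by auto
    also have "\<dots> \<longleftrightarrow> m \<le> Suc n \<and> (\<forall>j. Suc n < j + m \<longrightarrow> j \<le> Suc n \<longrightarrow> j \<notin> S)"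
    proof
      assume "m \<le> Suc n \<and> (\<forall>j. Suc n < j + m \<longrightarrow> j \<le> Suc n \<longrightarrow> j \<notin> S)"
      then have "m' \<le> n" and run: "\<And>j. Suc n < j + m \<Longrightarrow> j \<le> Suc n \<Longrightarrow> j \<notin> S"
        using Suc by auto
      moreover have "Suc n \<notin> S" using run[of "Suc n"] Suc by simp
      moreover have "\<forall>j. n < j + m' \<longrightarrow> j \<le> n \<longrightarrow> j \<notin> S" using run Suc by auto
      ultimately show "Suc n \<notin> S \<and> m' \<le> n \<and> (\<forall>j. n < j + m' \<longrightarrow> j \<le> n \<longrightarrow> j \<notin> S)"
        by blast
    qed (use Suc in \<open>auto simp: le_Suc_eq\<close>)
    finally show ?thesis .
  qed simp
qed auto

lemma has_gap_iff_final_run: "k \<ge> 1 \<Longrightarrow> has_gap k n S \<longleftrightarrow> (\<exists>e\<le>n. k \<le> final_run e S)"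
proof (induction n)
  case (Suc n)
  then show ?case by (auto simp del: final_run.simps simp: le_Suc_eq)
qed simp

lemma has_gap_iff:
  assumes k: "k \<ge> 1"
  shows "has_gap k n S \<longleftrightarrow> (\<exists>i. 1 \<le> i \<and> i + k - 1 \<le> n \<and> (\<forall>j\<in>{i..i+k-1}. j \<notin> S))"
proof
  assume "has_gap k n S"
  then obtain e where "e \<le> n" "k \<le> final_run e S" using has_gap_iff_final_run[OF k] by blast
  then show "\<exists>i. 1 \<le> i \<and> i + k - 1 \<le> n \<and> (\<forall>j\<in>{i..i+k-1}. j \<notin> S)"
    using k unfolding le_final_run_iff by (intro exI[of _ "e + 1 - k"]) auto
next
  assume "\<exists>i. 1 \<le> i \<and> i + k - 1 \<le> n \<and> (\<forall>j\<in>{i..i+k-1}. j \<notin> S)"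
  then obtain i where i: "1 \<le> i" "i + k - 1 \<le> n" "\<forall>j\<in>{i..i+k-1}. j \<notin> S" by blast
  then have "k \<le> final_run (i + k - 1) S" unfolding le_final_run_iff using k by auto
  then show "has_gap k n S" using has_gap_iff_final_run[OF k] i by blast
qed

lemma nogap_sum_0: "nogap_sum k u 0 \<phi> = \<phi> 0"
  unfolding nogap_sum_def pattern_prob_def by simp

text \<open>Patterns on \<open>1..n+1\<close> are those on \<open>1..n\<close>, with or without \<open>n+1\<close>.\<close>
lemma nogap_sum_Suc:
  assumes k: "k \<ge> 1"
  shows "nogap_sum k u (Suc n) \<phi> = nogap_sum k u n (transfer k (u (Suc n)) \<phi>)"
proof -
  let ?f = "\<lambda>S. if has_gap k (Suc n) S then 0 else pattern_prob u (Suc n) S * \<phi> (final_run (Suc n) S)"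
  have Pow_Suc: "Pow {1..Suc n} = Pow {1..n} \<union> insert (Suc n) ` Pow {1..n}"
    by (simp add: atLeastAtMostSuc_conv Pow_insert)
  have inj: "inj_on (insert (Suc n)) (Pow {1..n})"
    by (rule inj_onI) (metis Pow_iff atLeastAtMost_iff insert_ident not_less_eq_eq subset_eq order_refl)
  have "nogap_sum k u (Suc n) \<phi> = sum ?f (Pow {1..n}) + sum ?f (insert (Suc n) ` Pow {1..n})"
    unfolding nogap_sum_def Pow_Suc by (rule sum.union_disjoint) auto
  also have "\<dots> = sum ?f (Pow {1..n}) + sum (?f \<circ> insert (Suc n)) (Pow {1..n})"
    by (simp only: sum.reindex[OF inj])
  also have "\<dots> = (\<Sum>S\<in>Pow {1..n}. if has_gap k n S then 0
      else pattern_prob u n S * transfer k (u (Suc n)) \<phi> (final_run n S))"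
    unfolding sum.distrib[symmetric]
  proof (intro sum.cong refl)
    fix S assume "S \<in> Pow {1..n}"
    then have nS: "Suc n \<notin> S" by auto
    have out: "pattern_prob u (Suc n) S = (1 - u (Suc n)) * pattern_prob u n S"
      unfolding pattern_prob_def using nS by (simp add: atLeastAtMostSuc_conv)
    have "pattern_prob u (Suc n) (insert (Suc n) S) = u (Suc n) * pattern_prob u n (insert (Suc n) S)"
      unfolding pattern_prob_def by (simp add: atLeastAtMostSuc_conv)
    also have "pattern_prob u n (insert (Suc n) S) = pattern_prob u n S"
      unfolding pattern_prob_def by (intro prod.cong) auto
    finally have into: "pattern_prob u (Suc n) (insert (Suc n) S) = u (Suc n) * pattern_prob u n S" .
    have gap_in: "has_gap k (Suc n) (insert (Suc n) S) = has_gap k n S"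
      using has_gap_insert[of n "Suc n" k S] k by simp
    show "?f S + (?f \<circ> insert (Suc n)) S = (if has_gap k n S then 0
      else pattern_prob u n S * transfer k (u (Suc n)) \<phi> (final_run n S))"
      using nS unfolding comp_def gap_in out into transfer_def
      by (cases "has_gap k n S"; cases "Suc (final_run n S) < k") (simp_all add: algebra_simps)
  qed
  finally show ?thesis unfolding nogap_sum_def .
qed

lemma nogap_sum_mono:
  assumes k: "k \<ge> 1" and u: "\<And>i. i \<in> {1..n} \<Longrightarrow> u i \<in> {0..1}"
    and le: "\<And>t. t < k \<Longrightarrow> \<phi> t \<le> \<psi> t"
  shows "nogap_sum k u n \<phi> \<le> nogap_sum k u n \<psi>"
  unfolding nogap_sum_def using final_run_less[OF k] pattern_prob_nonneg[OF u] le
  by (intro sum_mono) (auto intro: mult_left_mono)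

lemma nogap_sum_cong:
  "k \<ge> 1 \<Longrightarrow> (\<And>t. t < k \<Longrightarrow> \<phi> t = \<psi> t) \<Longrightarrow> nogap_sum k u n \<phi> = nogap_sum k u n \<psi>"
  unfolding nogap_sum_def using final_run_less by (intro sum.cong) auto

lemma nogap_sum_scale: "nogap_sum k u n (\<lambda>t. c * \<phi> t) = c * nogap_sum k u n \<phi>"
  unfolding nogap_sum_def sum_distrib_left by (intro sum.cong refl) auto

text \<open>If all of the first \<open>m\<close> events have probability at least
  \<open>1 - x\<close>, then testing with the eigenvector \<open>w_x\<close> gives at most \<open>\<Prod>i\<le>m. f_k(1 - u_i)\<close>:
  replace \<open>w_x\<close> by \<open>w_q\<close> with \<open>q = 1 - u_m \<le> x\<close> (monotonicity), peel off event \<open>m\<close>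
  (eigenvalue \<open>f_k(q)\<close>) and use induction, which applies since \<open>u\<close> is antitone.\<close>
lemma nogap_sum_eigvec_le:
  assumes k: "k \<ge> 1" and u: "\<And>i. i \<in> {1..n} \<Longrightarrow> u i \<in> {0..1}"
    and anti: "\<And>i j. 1 \<le> i \<Longrightarrow> i \<le> j \<Longrightarrow> j \<le> n \<Longrightarrow> u j \<le> u i"
  shows "m \<le> n \<Longrightarrow> x \<in> {0..1} \<Longrightarrow> (\<And>i. i \<in> {1..m} \<Longrightarrow> 1 - u i \<le> x) \<Longrightarrow>
     nogap_sum k u m (eigvec k x) \<le> (\<Prod>i\<in>{1..m}. f_k k (1 - u i))"
proof (induction m arbitrary: x)
  case 0
  then show ?case using eigvec_0[OF k] by (simp add: nogap_sum_0)
next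
  case (Suc m)
  define q where "q = 1 - u (Suc m)"
  have q: "q \<in> {0..1}" using u[of "Suc m"] Suc.prems unfolding q_def by auto
  have u': "\<And>i. i \<in> {1..Suc m} \<Longrightarrow> u i \<in> {0..1}" using u Suc.prems by auto
  have "nogap_sum k u (Suc m) (eigvec k x) \<le> nogap_sum k u (Suc m) (eigvec k q)"
    using eigvec_antitone[OF k q Suc.prems(2)] Suc.prems(3)[of "Suc m"] u' unfolding q_def
    by (intro nogap_sum_mono[OF k]) auto
  also have "\<dots> = nogap_sum k u m (\<lambda>t. f_k k q * eigvec k q t)"
    unfolding nogap_sum_Suc[OF k] using transfer_eigvec[OF k q] unfolding q_def
    by (intro nogap_sum_cong[OF k]) simp
  also have "\<dots> = f_k k q * nogap_sum k u m (eigvec k q)" by (rule nogap_sum_scale)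
  also have "\<dots> \<le> f_k k q * (\<Prod>i\<in>{1..m}. f_k k (1 - u i))"
  proof (rule mult_left_mono)
    show "nogap_sum k u m (eigvec k q) \<le> (\<Prod>i\<in>{1..m}. f_k k (1 - u i))"
      using Suc.prems q anti[of _ "Suc m"] unfolding q_def by (intro Suc.IH) auto
    show "0 \<le> f_k k q" using f_k_range[OF k q] by auto
  qed
  also have "\<dots> = (\<Prod>i\<in>{1..Suc m}. f_k k (1 - u i))"
    unfolding q_def by (simp add: atLeastAtMostSuc_conv)
  finally show ?case .
qed

text \<open>The effect of the events \<open>j+1, \<dots>, j+r\<close> on a test function.\<close>
fun transfer_iter :: "nat \<Rightarrow> (nat \<Rightarrow> real) \<Rightarrow> nat \<Rightarrow> nat \<Rightarrow> (nat \<Rightarrow> real) \<Rightarrow> nat \<Rightarrow> real" where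
  "transfer_iter k u j 0 \<phi> = \<phi>"
| "transfer_iter k u j (Suc r) \<phi> = transfer k (u (Suc j)) (transfer_iter k u (Suc j) r \<phi>)"

lemma nogap_sum_add: "k \<ge> 1 \<Longrightarrow> nogap_sum k u (j + r) \<phi> = nogap_sum k u j (transfer_iter k u j r \<phi>)"
proof (induction r arbitrary: j)
  case (Suc r)
  have "nogap_sum k u (j + Suc r) \<phi> = nogap_sum k u (Suc j) (transfer_iter k u (Suc j) r \<phi>)"
    using Suc.IH[OF Suc.prems, of "Suc j"] by simp
  then show ?case by (simp add: nogap_sum_Suc[OF Suc.prems])
qed simp

text \<open>After \<open>r\<close> further events, each of probability at most \<open>1 - x\<close>, the no-gap
  probability given a run of length \<open>t\<close> is at most \<open>1\<close>, and at most \<open>1 - x^(k-t)\<close> when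
  \<open>r \<ge> k - t\<close>: the run is completed to a gap with probability at least \<open>x^(k-t)\<close>.\<close>
lemma transfer_iter_le:
  assumes k: "k \<ge> 1" and x: "0 \<le> x"
  shows "(\<And>i. i \<in> {Suc j..j + r} \<Longrightarrow> u i \<in> {0..1} \<and> x \<le> 1 - u i) \<Longrightarrow> t < k \<Longrightarrow>
    transfer_iter k u j r (\<lambda>_. 1) t \<le> 1 \<and>
    (k - t \<le> r \<longrightarrow> transfer_iter k u j r (\<lambda>_. 1) t \<le> 1 - x ^ (k - t))"
proof (induction r arbitrary: j t)
  case (Suc r)
  define \<phi> where "\<phi> = transfer_iter k u (Suc j) r (\<lambda>_. 1)"
  define p where "p = u (Suc j)"
  have p: "0 \<le> p" "p \<le> 1" "x \<le> 1 - p" using Suc.prems(1)[of "Suc j"] unfolding p_def by auto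
  have IH: "\<phi> s \<le> 1 \<and> (k - s \<le> r \<longrightarrow> \<phi> s \<le> 1 - x ^ (k - s))" if "s < k" for s
    unfolding \<phi>_def using Suc.IH[of "Suc j" s] Suc.prems(1) that by auto
  have eq: "transfer_iter k u j (Suc r) (\<lambda>_. 1) t
      = p * \<phi> 0 + (1 - p) * (if Suc t < k then \<phi> (Suc t) else 0)"
    by (simp add: transfer_def \<phi>_def p_def)
  have first: "p * \<phi> 0 \<le> p" using IH[of 0] k p by (simp add: mult_left_le)
  have "(1 - p) * (if Suc t < k then \<phi> (Suc t) else 0) \<le> 1 - p"
    using IH[of "Suc t"] p by (auto simp: mult_left_le)
  then have bound1: "transfer_iter k u j (Suc r) (\<lambda>_. 1) t \<le> 1" using eq first by linarith
  have bound2: "transfer_iter k u j (Suc r) (\<lambda>_. 1) t \<le> 1 - x ^ (k - t)" if "k - t \<le> Suc r"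
  proof (cases "Suc t < k")
    case True
    then have "k - t = Suc (k - Suc t)" by simp
    then have power: "x ^ (k - t) = x * x ^ (k - Suc t)" by simp
    have "(1 - p) * \<phi> (Suc t) \<le> (1 - p) * (1 - x ^ (k - Suc t))"
      using IH[of "Suc t"] True that p by (intro mult_left_mono) auto
    moreover have "x * x ^ (k - Suc t) \<le> (1 - p) * x ^ (k - Suc t)"
      using p x by (intro mult_right_mono) auto
    ultimately show ?thesis using eq first True power by (simp add: algebra_simps)
  next
    case False
    then have "k - t = 1" using Suc.prems(2) by simp
    then show ?thesis using eq first False p by simp
  qed
  show ?case using bound1 bound2 by blast
qed simp

text \<open>Split off the last \<open>k - 1\<close> events: their
  effect on the constant test function is dominated by the eigenvector \<open>w_x\<close> with
  \<open>x = 1 - u_N\<close>, \<open>N = n - k + 1\<close>, thanks to \<open>w_x(t) \<ge> 1 - x^(k-t)\<close>; then apply the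
  eigenvector estimate to the first \<open>N\<close> events.\<close>
theorem nogap_sum_le_prod:
  assumes k: "k \<ge> 1" and nk: "k \<le> n" and u: "\<And>i. i \<in> {1..n} \<Longrightarrow> u i \<in> {0..1}"
    and anti: "\<And>i j. 1 \<le> i \<Longrightarrow> i \<le> j \<Longrightarrow> j \<le> n \<Longrightarrow> u j \<le> u i"
  shows "nogap_sum k u n (\<lambda>_. 1) \<le> (\<Prod>i\<in>{1..n+1-k}. f_k k (1 - u i))"
proof -
  define N where "N = n + 1 - k"
  have N: "1 \<le> N" "N \<le> n" "n = N + (k - 1)" using k nk unfolding N_def by auto
  define x where "x = 1 - u N"
  have x: "x \<in> {0..1}" using u[of N] N unfolding x_def by auto
  have tail: "transfer_iter k u N (k - 1) (\<lambda>_. 1) t \<le> eigvec k x t" if t: "t < k" for t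
  proof -
    have "\<And>i. i \<in> {Suc N..N + (k - 1)} \<Longrightarrow> u i \<in> {0..1} \<and> x \<le> 1 - u i"
      using u anti[of N] N unfolding x_def by force
    then have bound: "transfer_iter k u N (k - 1) (\<lambda>_. 1) t \<le> 1 \<and>
        (k - t \<le> k - 1 \<longrightarrow> transfer_iter k u N (k - 1) (\<lambda>_. 1) t \<le> 1 - x ^ (k - t))"
      using transfer_iter_le[OF k, of x N "k - 1" u t] x t by auto
    show ?thesis
    proof (cases "t = 0")
      case True
      then show ?thesis using bound eigvec_0[OF k x] by simp
    next
      case False
      then have "transfer_iter k u N (k - 1) (\<lambda>_. 1) t \<le> 1 - x ^ (k - t)" using bound by simp
      moreover have "1 - x ^ (k - t) \<le> eigvec k x t" using eigvec_lower[OF k x, of "k - t"] t by simp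
      ultimately show ?thesis by linarith
    qed
  qed
  have "nogap_sum k u n (\<lambda>_. 1) = nogap_sum k u N (transfer_iter k u N (k - 1) (\<lambda>_. 1))"
    using nogap_sum_add[OF k, of u N "k - 1"] N by simp
  also have "\<dots> \<le> nogap_sum k u N (eigvec k x)"
    using u N tail by (intro nogap_sum_mono[OF k]) auto
  also have "\<dots> \<le> (\<Prod>i\<in>{1..N}. f_k k (1 - u i))"
    using nogap_sum_eigvec_le[OF k u anti, where m = N and x = x] N x anti[of _ N] unfolding x_def by auto
  finally show ?thesis unfolding N_def .
qed

lemma (in prob_space) occurrence_pattern_event:
  assumes events: "A ` I \<subseteq> events" and fin: "finite I" and S: "S \<subseteq> I"
  shows "{\<omega> \<in> space M. {i \<in> I. \<omega> \<in> A i} = S} \<in> events"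
proof -
  have "{\<omega> \<in> space M. {i \<in> I. \<omega> \<in> A i} = S} = {\<omega> \<in> space M. \<forall>i\<in>I. \<omega> \<in> A i \<longleftrightarrow> i \<in> S}"
    using S by blast
  also have "\<dots> \<in> events"
  proof (rule sets.sets_Collect_finite_All[OF _ fin])
    fix i assume "i \<in> I"
    then have "A i \<in> events" using events by auto
    moreover have "{\<omega> \<in> space M. \<omega> \<in> A i \<longleftrightarrow> i \<in> S} = (if i \<in> S then A i else space M - A i)"
      using sets.sets_into_space[OF \<open>A i \<in> events\<close>] by auto
    ultimately show "{\<omega> \<in> space M. \<omega> \<in> A i \<longleftrightarrow> i \<in> S} \<in> events" by auto
  qed
  finally show ?thesis .
qed

text \<open>The
  complements stay independent since independence passes to the generated
  \<open>\<sigma>\<close>-algebras.\<close>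
lemma (in prob_space) prob_occurrence_pattern:
  assumes indep: "indep_events A I" and fin: "finite I" and S: "S \<subseteq> I"
  shows "prob {\<omega> \<in> space M. {i \<in> I. \<omega> \<in> A i} = S}
           = (\<Prod>i\<in>I. if i \<in> S then prob (A i) else 1 - prob (A i))"
proof (cases "I = {}")
  case True
  then show ?thesis using S by (simp add: prob_space)
next
  case False
  define B where "B i = (if i \<in> S then A i else space M - A i)" for i
  have events: "A i \<in> events" if "i \<in> I" for i
    using indep that unfolding indep_events_def by auto
  obtain i0 where "i0 \<in> I" using False by blast
  have "B i0 \<subseteq> space M" using sets.sets_into_space[OF events[OF \<open>i0 \<in> I\<close>]] unfolding B_def by auto
  have pattern: "{\<omega> \<in> space M. {i \<in> I. \<omega> \<in> A i} = S} = (\<Inter>i\<in>I. B i)"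
  proof (intro set_eqI iffI)
    fix \<omega> assume "\<omega> \<in> {\<omega> \<in> space M. {i \<in> I. \<omega> \<in> A i} = S}"
    then show "\<omega> \<in> (\<Inter>i\<in>I. B i)" using S unfolding B_def by auto
  next
    fix \<omega> assume \<omega>: "\<omega> \<in> (\<Inter>i\<in>I. B i)"
    then have "\<omega> \<in> space M" using \<open>B i0 \<subseteq> space M\<close> \<open>i0 \<in> I\<close> by auto
    moreover have "\<omega> \<in> A i \<longleftrightarrow> i \<in> S" if "i \<in> I" for i
      using \<omega> that unfolding B_def by (cases "i \<in> S") auto
    ultimately show "\<omega> \<in> {\<omega> \<in> space M. {i \<in> I. \<omega> \<in> A i} = S}" using S by auto
  qed
  have "indep_sets (\<lambda>i. sigma_sets (space M) {A i}) I"
    using indep unfolding indep_events_def_alt by (rule indep_sets_sigma) (auto simp: Int_stable_def)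
  then have "prob (\<Inter>i\<in>I. B i) = (\<Prod>i\<in>I. prob (B i))"
    by (rule indep_setsD[OF _ subset_refl False fin])
      (auto simp: B_def intro: sigma_sets.Basic sigma_sets.Compl)
  also have "\<dots> = (\<Prod>i\<in>I. if i \<in> S then prob (A i) else 1 - prob (A i))"
    using events by (intro prod.cong) (auto simp: B_def prob_compl)
  finally show ?thesis unfolding pattern .
qed

lemma (in prob_space) prob_pattern_property:
  assumes indep: "indep_events A I" and fin: "finite I"
  shows "prob {\<omega> \<in> space M. P {i \<in> I. \<omega> \<in> A i}}
           = (\<Sum>S\<in>{S \<in> Pow I. P S}. \<Prod>i\<in>I. if i \<in> S then prob (A i) else 1 - prob (A i))"
proof -
  have events: "A ` I \<subseteq> events" using indep unfolding indep_events_def by auto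
  have "{\<omega> \<in> space M. P {i \<in> I. \<omega> \<in> A i}}
      = (\<Union>S\<in>{S \<in> Pow I. P S}. {\<omega> \<in> space M. {i \<in> I. \<omega> \<in> A i} = S})"
    by auto
  then have "prob {\<omega> \<in> space M. P {i \<in> I. \<omega> \<in> A i}}
      = (\<Sum>S\<in>{S \<in> Pow I. P S}. prob {\<omega> \<in> space M. {i \<in> I. \<omega> \<in> A i} = S})"
    using fin occurrence_pattern_event[OF events fin]
    by (simp only:) (rule finite_measure_finite_Union, auto simp: disjoint_family_on_def)
  also have "\<dots> = (\<Sum>S\<in>{S \<in> Pow I. P S}. \<Prod>i\<in>I. if i \<in> S then prob (A i) else 1 - prob (A i))"
    using prob_occurrence_pattern[OF indep fin] by (intro sum.cong) auto
  finally show ?thesis .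
qed

lemma (in prob_space) prob_no_gap:
  assumes k: "k \<ge> 1" and indep: "indep_events A {1..n}"
    and u: "\<And>i. i \<in> {1..n} \<Longrightarrow> prob (A i) = u i"
  shows "prob {\<omega> \<in> space M. \<not> has_k_gap k n A \<omega>} = nogap_sum k u n (\<lambda>_. 1)"
proof -
  have "{\<omega> \<in> space M. \<not> has_k_gap k n A \<omega>} = {\<omega> \<in> space M. \<not> has_gap k n {i \<in> {1..n}. \<omega> \<in> A i}}"
    unfolding has_k_gap_def has_gap_iff[OF k] by auto
  then have "prob {\<omega> \<in> space M. \<not> has_k_gap k n A \<omega>}
      = (\<Sum>S\<in>{S \<in> Pow {1..n}. \<not> has_gap k n S}. \<Prod>i\<in>{1..n}. if i \<in> S then prob (A i) else 1 - prob (A i))"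
    using prob_pattern_property[OF indep, of "\<lambda>S. \<not> has_gap k n S"] by simp
  also have "\<dots> = (\<Sum>S\<in>{S \<in> Pow {1..n}. \<not> has_gap k n S}. pattern_prob u n S)"
    using u unfolding pattern_prob_def by (intro sum.cong prod.cong) auto
  also have "\<dots> = nogap_sum k u n (\<lambda>_. 1)"
    unfolding nogap_sum_def sum.inter_filter[OF finite_Pow_iff[THEN iffD2, OF finite_atLeastAtMost]]
    by (intro sum.cong) auto
  finally show ?thesis .
qed

theorem mainTheorem4:
  fixes M :: "'a measure" and A :: "nat \<Rightarrow> 'a set" and u :: "nat \<Rightarrow> real"
    and k n :: nat
  assumes "prob_space M"
    and "k \<ge> 1"
    and "prob_space.indep_events M A {1..n}"
    and "\<And>i. i \<in> {1..n} \<Longrightarrow> measure M (A i) = u i"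
    and "\<And>i. i \<in> {1..n} \<Longrightarrow> 0 \<le> u i \<and> u i \<le> 1"
    and "\<And>i j. 1 \<le> i \<Longrightarrow> i \<le> j \<Longrightarrow> j \<le> n \<Longrightarrow> u j \<le> u i"
  shows "measure M {\<omega> \<in> space M. \<not> has_k_gap k n A \<omega>}
           \<le> (\<Prod>i\<in>{1..n+1-k}. f_k k (1 - u i))"
proof -
  interpret prob_space M by fact
  show ?thesis
  proof (cases "k \<le> n")
    case True
    have "measure M {\<omega> \<in> space M. \<not> has_k_gap k n A \<omega>} = nogap_sum k u n (\<lambda>_. 1)"
      using prob_no_gap[OF assms(2,3,4)] .
    also have "\<dots> \<le> (\<Prod>i\<in>{1..n+1-k}. f_k k (1 - u i))"
      using assms(5) by (intro nogap_sum_le_prod[OF assms(2) True _ assms(6)]) auto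
    finally show ?thesis .
  next
    case False
    then show ?thesis by (simp add: prob_le_1)
  qed
qed

end
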